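(* Let $G$ be a $4$-vertex-critical graph, and suppose $C$ is an induced cycle of $G$ such that every vertex of $C$ has degree exactly three in $G$. Then $C$ has odd length, and there is a $3$-coloring of $G-V(C)$ under which every vertex of the set $\left(\bigcup_{c \in V(C)} N_G(c)\right) \setminus V(C)$ receives the same color.
   Context: A $k$-coloring of a graph $G$ is a map $c:V(G)\to\{1,\dots,k\}$ with $c(x)\neq c(y)$ for every edge $xy$. A graph is $k$-chromatic if it is $k$-colorable but not $(k-1)$-colorable. A graph $G$ is $k$-vertex-critical if it is $k$-chromatic and every proper induced subgraph of $G$ is $(k-1)$-colorable. $G-V(C)$ is the subgraph induced by $V(G)\setminus V(C)$; $N_G(c)$ is the neighborhood of $c$ in $G$. *)

theory Defs
  imports Main
begin

definition simple_graph :: "'a set \<Rightarrow> ('a \<Rightarrow> 'a \<Rightarrow> bool) \<Rightarrow> bool" where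
  "simple_graph V E \<longleftrightarrow> finite V \<and> (\<forall>x y. E x y \<longrightarrow> x \<in> V \<and> y \<in> V)
     \<and> (\<forall>x y. E x y \<longrightarrow> E y x) \<and> (\<forall>x. \<not> E x x)"

definition is_coloring :: "'a set \<Rightarrow> ('a \<Rightarrow> 'a \<Rightarrow> bool) \<Rightarrow> nat \<Rightarrow> ('a \<Rightarrow> nat) \<Rightarrow> bool" where
  "is_coloring S E k c \<longleftrightarrow> (\<forall>x\<in>S. c x \<in> {1..k}) \<and> (\<forall>x\<in>S. \<forall>y\<in>S. E x y \<longrightarrow> c x \<noteq> c y)"

definition colorable :: "'a set \<Rightarrow> ('a \<Rightarrow> 'a \<Rightarrow> bool) \<Rightarrow> nat \<Rightarrow> bool" where
  "colorable S E k \<longleftrightarrow> (\<exists>c. is_coloring S E k c)"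

definition chromatic :: "'a set \<Rightarrow> ('a \<Rightarrow> 'a \<Rightarrow> bool) \<Rightarrow> nat \<Rightarrow> bool" where
  "chromatic V E k \<longleftrightarrow> colorable V E k \<and> \<not> colorable V E (k - 1)"

definition vertex_critical :: "'a set \<Rightarrow> ('a \<Rightarrow> 'a \<Rightarrow> bool) \<Rightarrow> nat \<Rightarrow> bool" where
  "vertex_critical V E k \<longleftrightarrow> chromatic V E k \<and> (\<forall>S. S \<subset> V \<longrightarrow> colorable S E (k - 1))"

definition nbhd :: "'a set \<Rightarrow> ('a \<Rightarrow> 'a \<Rightarrow> bool) \<Rightarrow> 'a \<Rightarrow> 'a set" where
  "nbhd V E v = {u \<in> V. E v u}"

definition degree :: "'a set \<Rightarrow> ('a \<Rightarrow> 'a \<Rightarrow> bool) \<Rightarrow> 'a \<Rightarrow> nat" where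
  "degree V E v = card (nbhd V E v)"

definition induced_cycle :: "'a set \<Rightarrow> ('a \<Rightarrow> 'a \<Rightarrow> bool) \<Rightarrow> 'a list \<Rightarrow> bool" where
  "induced_cycle V E cs \<longleftrightarrow> length cs \<ge> 3 \<and> distinct cs \<and> set cs \<subseteq> V \<and>
     (\<forall>i<length cs. \<forall>j<length cs.
        E (cs ! i) (cs ! j) \<longleftrightarrow> (j = (i + 1) mod length cs \<or> i = (j + 1) mod length cs))"

end

theory Submission
  imports Defs
begin

text \<open>By criticality, \<open>G - V(C)\<close> has a 3-coloring \<open>c\<close>. Every vertex \<open>v\<^sub>i\<close> of \<open>C\<close> has two
  neighbours on \<open>C\<close> and hence exactly one neighbour \<open>o\<^sub>i\<close> outside, so \<open>c\<close> extends to \<open>G\<close>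
  as soon as \<open>C\<close> has a proper 3-coloring in which \<open>v\<^sub>i\<close> avoids \<open>c(o\<^sub>i)\<close>. Such a
  coloring always exists unless all forbidden colors \<open>c(o\<^sub>i)\<close> coincide and \<open>C\<close> is odd: if two
  consecutive forbidden colors differ, color greedily around the cycle starting between them;
  if they are all equal, an even cycle alternates the two remaining colors. Since \<open>G\<close> is not
  3-colorable, \<open>C\<close> is odd and \<open>c\<close> is constant on the outer neighbours.\<close>

definition fresh_color :: "nat \<Rightarrow> nat \<Rightarrow> nat" where
  "fresh_color a b = (if a \<noteq> 1 \<and> b \<noteq> 1 then 1 else if a \<noteq> 2 \<and> b \<noteq> 2 then 2 else 3)"

lemma fresh_color [simp]:
  "Suc 0 \<le> fresh_color a b" "fresh_color a b \<le> 3"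
  "fresh_color a b \<noteq> a" "fresh_color a b \<noteq> b" "a \<noteq> fresh_color a b" "b \<noteq> fresh_color a b"
  unfolding fresh_color_def by auto

primrec greedy_coloring :: "(nat \<Rightarrow> nat) \<Rightarrow> nat \<Rightarrow> nat \<Rightarrow> nat" where
  "greedy_coloring f s 0 = s"
| "greedy_coloring f s (Suc j) = fresh_color (f (Suc j)) (greedy_coloring f s j)"

definition cycle_coloring_avoiding :: "nat \<Rightarrow> (nat \<Rightarrow> nat) \<Rightarrow> (nat \<Rightarrow> nat) \<Rightarrow> bool" where
  "cycle_coloring_avoiding n f col \<longleftrightarrow>
     (\<forall>i<n. col i \<in> {1..3} \<and> col i \<noteq> f i \<and> col i \<noteq> col (Suc i mod n))"

text \<open>Starting with color \<open>f (n - 1)\<close> closes the cycle: vertex \<open>n - 1\<close> must avoid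
  \<open>f (n - 1)\<close>, which is then the color of vertex \<open>0\<close>.\<close>
lemma cycle_coloring_avoiding_greedy:
  assumes "2 \<le> n" "f (n - 1) \<noteq> f 0" "f (n - 1) \<in> {1..3}"
  shows "cycle_coloring_avoiding n f (greedy_coloring f (f (n - 1)))"
  unfolding cycle_coloring_avoiding_def
proof (intro allI impI conjI)
  fix i assume "i < n"
  show "greedy_coloring f (f (n - 1)) i \<in> {1..3}"
    using assms by (cases i) auto
  show "greedy_coloring f (f (n - 1)) i \<noteq> f i"
    using assms by (cases i) auto
  show "greedy_coloring f (f (n - 1)) i \<noteq> greedy_coloring f (f (n - 1)) (Suc i mod n)"
  proof (cases "Suc i = n")
    case True
    then obtain m where "i = Suc m" "n - 1 = Suc m" using assms(1) by (cases i) auto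
    with True show ?thesis by simp
  next
    case False
    with \<open>i < n\<close> show ?thesis by simp
  qed
qed

lemma cycle_coloring_avoiding_rotate:
  assumes "k < n" "cycle_coloring_avoiding n (\<lambda>i. f ((i + k) mod n)) col"
  shows "cycle_coloring_avoiding n f (\<lambda>i. col ((i + (n - k)) mod n))"
  unfolding cycle_coloring_avoiding_def
proof (intro allI impI)
  fix i assume "i < n"
  define j where "j = (i + (n - k)) mod n"
  have "j < n" using \<open>i < n\<close> by (simp add: j_def)
  have "(j + k) mod n = i" using \<open>i < n\<close> assms(1) by (simp add: j_def mod_simps)
  moreover have "(Suc i mod n + (n - k)) mod n = Suc j mod n" by (simp add: j_def mod_simps)
  ultimately show "col j \<in> {1..3} \<and> col j \<noteq> f i \<and> col j \<noteq> col ((Suc i mod n + (n - k)) mod n)"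
    using assms(2) \<open>j < n\<close> unfolding cycle_coloring_avoiding_def by metis
qed

lemma cycle_coloring_avoiding_alternating:
  assumes "even n" "\<forall>i<n. f i = a"
  shows "cycle_coloring_avoiding n f (\<lambda>i. if even i then fresh_color a a else fresh_color a (fresh_color a a))"
  unfolding cycle_coloring_avoiding_def
proof (intro allI impI conjI)
  fix i assume "i < n"
  then consider "Suc i < n" | "Suc i = n" "odd i" using assms(1) by fastforce
  then show "(if even i then fresh_color a a else fresh_color a (fresh_color a a)) \<noteq>
      (if even (Suc i mod n) then fresh_color a a else fresh_color a (fresh_color a a))"
    by cases auto
qed (use assms in \<open>auto\<close>)

lemma cycle_coloring_avoiding_exists:
  assumes "2 \<le> n" "\<forall>i<n. f i \<in> {1..3}" "\<not> (odd n \<and> (\<forall>i<n. f i = f 0))"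
  shows "\<exists>col. cycle_coloring_avoiding n f col"
proof (cases "\<exists>k<n. f k \<noteq> f (Suc k mod n)")
  case True
  then obtain k where "k < n" "f k \<noteq> f (Suc k mod n)" by blast
  define r where "r = Suc k mod n"
  let ?g = "\<lambda>i. f ((i + r) mod n)"
  have "r < n" "?g 0 = f (Suc k mod n)" using \<open>k < n\<close> by (simp_all add: r_def)
  moreover have "?g (n - 1) = f k"
  proof (cases "Suc k = n")
    case True
    then have "k = n - 1" by simp
    then show ?thesis using True by (simp add: r_def)
  next
    case False
    then have "n - 1 + r = k + n" using \<open>k < n\<close> by (simp add: r_def)
    then show ?thesis using \<open>k < n\<close> by simp
  qed
  ultimately have "cycle_coloring_avoiding n ?g (greedy_coloring ?g (?g (n - 1)))"
    using assms \<open>k < n\<close> \<open>f k \<noteq> f (Suc k mod n)\<close> by (intro cycle_coloring_avoiding_greedy) simp_all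
  then show ?thesis using cycle_coloring_avoiding_rotate[OF \<open>r < n\<close>] by blast
next
  case False
  have "f i = f 0" if "i < n" for i
    using that
  proof (induction i)
    case (Suc i)
    then have "f i = f (Suc i mod n)" using False Suc_lessD by blast
    with Suc show ?case by simp
  qed simp
  with assms have "even n" by blast
  then show ?thesis using cycle_coloring_avoiding_alternating \<open>\<And>i. i < n \<Longrightarrow> f i = f 0\<close> by blast
qed

lemma cyclic_succ_eq_iff:
  assumes "i < (n::nat)" "j < n"
  shows "i = Suc j mod n \<longleftrightarrow> j = (i + n - 1) mod n"
  using assms by (cases i) (auto simp: mod_Suc)

lemma cyclic_succ_ne_pred:
  assumes "3 \<le> (n::nat)" "i < n"
  shows "Suc i mod n \<noteq> (i + n - 1) mod n"
  using assms by (cases i) (auto simp: mod_Suc)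

lemma induced_cycle_adj_iff:
  assumes "induced_cycle V E cs" "i < length cs" "j < length cs"
  shows "E (cs ! i) (cs ! j) \<longleftrightarrow>
    j = Suc i mod length cs \<or> j = (i + length cs - 1) mod length cs"
  using assms cyclic_succ_eq_iff[of i "length cs" j] unfolding induced_cycle_def by auto

lemma induced_cycle_card_nbhd_Int:
  assumes "induced_cycle V E cs" "i < length cs"
  shows "card (nbhd V E (cs ! i) \<inter> set cs) = 2"
proof -
  let ?n = "length cs"
  let ?J = "{Suc i mod ?n, (i + ?n - 1) mod ?n}"
  have "?n \<ge> 3" "distinct cs" "set cs \<subseteq> V" using assms(1) by (simp_all add: induced_cycle_def)
  have "0 < ?n" using \<open>?n \<ge> 3\<close> by linarith
  then have "?J \<subseteq> {..<?n}" by simp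
  have "nbhd V E (cs ! i) \<inter> set cs = (!) cs ` ?J"
  proof (intro equalityI subsetI)
    fix x assume "x \<in> nbhd V E (cs ! i) \<inter> set cs"
    then obtain j where "j < ?n" "x = cs ! j" "E (cs ! i) (cs ! j)"
      by (auto simp: nbhd_def in_set_conv_nth)
    then show "x \<in> (!) cs ` ?J" using induced_cycle_adj_iff[OF assms] by blast
  next
    fix x assume "x \<in> (!) cs ` ?J"
    then obtain j where "j \<in> ?J" "x = cs ! j" by blast
    with \<open>?J \<subseteq> {..<?n}\<close> have "j < ?n" "E (cs ! i) x"
      using induced_cycle_adj_iff[OF assms] by auto
    then show "x \<in> nbhd V E (cs ! i) \<inter> set cs"
      using \<open>x = cs ! j\<close> \<open>set cs \<subseteq> V\<close> by (auto simp: nbhd_def)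
  qed
  moreover have "inj_on ((!) cs) ?J" using \<open>distinct cs\<close> \<open>?J \<subseteq> {..<?n}\<close> by (intro inj_on_nth) auto
  moreover have "card ?J = 2" using cyclic_succ_ne_pred[OF \<open>?n \<ge> 3\<close> assms(2)] by simp
  ultimately show ?thesis by (metis card_image)
qed

lemma induced_cycle_degree_three_outer_neighbour:
  assumes "simple_graph V E" "induced_cycle V E cs" "v \<in> set cs" "degree V E v = 3"
  shows "\<exists>u. nbhd V E v - set cs = {u}"
proof -
  obtain i where "i < length cs" "v = cs ! i" using assms(3) by (auto simp: in_set_conv_nth)
  have "finite (nbhd V E v)" using assms(1) by (simp add: simple_graph_def nbhd_def)
  then have "card (nbhd V E v - set cs) = card (nbhd V E v) - card (nbhd V E v \<inter> set cs)"
    by (simp add: card_Diff_subset_Int)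
  also have "\<dots> = 1"
    using assms(4) induced_cycle_card_nbhd_Int[OF assms(2) \<open>i < length cs\<close>] \<open>v = cs ! i\<close>
    by (simp add: degree_def)
  finally show ?thesis by (rule card_1_singletonE) blast
qed

lemma is_coloring_glue:
  assumes "is_coloring S E k d" "is_coloring (V - S) E k c"
    and "\<forall>x\<in>S. \<forall>y\<in>V - S. E x y \<or> E y x \<longrightarrow> d x \<noteq> c y"
  shows "is_coloring V E k (\<lambda>x. if x \<in> S then d x else c x)"
  using assms unfolding is_coloring_def by (metis DiffI)

lemma induced_cycle_is_coloring:
  assumes "induced_cycle V E cs"
    and "\<forall>i<length cs. col i \<in> {1..k} \<and> col i \<noteq> col (Suc i mod length cs)"
  obtains d where "is_coloring (set cs) E k d" "\<forall>i<length cs. d (cs ! i) = col i"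
proof
  let ?n = "length cs"
  let ?d = "col \<circ> inv_into {..<?n} ((!) cs)"
  have "inj_on ((!) cs) {..<?n}" using assms(1) by (intro inj_on_nth) (auto simp: induced_cycle_def)
  then show idx: "\<forall>i<?n. ?d (cs ! i) = col i" by simp
  have "col i \<noteq> col j" if "i < ?n" "j < ?n" "E (cs ! i) (cs ! j)" for i j
  proof -
    have "j = Suc i mod ?n \<or> i = Suc j mod ?n" using that assms(1) unfolding induced_cycle_def by auto
    then show ?thesis using assms(2) that by auto
  qed
  then show "is_coloring (set cs) E k ?d"
    using assms(2) idx unfolding is_coloring_def by (auto simp: in_set_conv_nth)
qed

lemma colorable_extend_across_induced_cycle:
  assumes "simple_graph V E" "induced_cycle V E cs" "is_coloring (V - set cs) E 3 c"
    and "\<forall>i<length cs. \<forall>u \<in> nbhd V E (cs ! i) - set cs. c u = f i"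
    and "cycle_coloring_avoiding (length cs) f col"
  shows "colorable V E 3"
proof -
  obtain d where d: "is_coloring (set cs) E 3 d" "\<forall>i<length cs. d (cs ! i) = col i"
    using induced_cycle_is_coloring[OF assms(2), of col 3] assms(5)
    unfolding cycle_coloring_avoiding_def by blast
  have "d x \<noteq> c y" if "x \<in> set cs" "y \<in> V - set cs" "E x y \<or> E y x" for x y
  proof -
    obtain i where i: "i < length cs" "x = cs ! i" using \<open>x \<in> set cs\<close> by (auto simp: in_set_conv_nth)
    have "E x y" using that(3) assms(1) by (auto simp: simple_graph_def)
    then have "c y = f i" using assms(4) i that(2) by (auto simp: nbhd_def)
    then show ?thesis using d(2) assms(5) i by (simp add: cycle_coloring_avoiding_def)
  qed
  then show ?thesis
    using is_coloring_glue[OF d(1) assms(3)] unfolding colorable_def by blast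
qed

lemma uncolorable_forces_outer_colors:
  assumes "simple_graph V E" "induced_cycle V E cs" "\<forall>v\<in>set cs. degree V E v = 3"
    and "is_coloring (V - set cs) E 3 c" "\<not> colorable V E 3"
  shows "odd (length cs) \<and> (\<exists>a. \<forall>u \<in> (\<Union>v\<in>set cs. nbhd V E v) - set cs. c u = a)"
proof -
  let ?n = "length cs"
  define ob where "ob i = the_elem (nbhd V E (cs ! i) - set cs)" for i
  have ob: "nbhd V E (cs ! i) - set cs = {ob i}" if i: "i < ?n" for i
  proof -
    obtain w where "nbhd V E (cs ! i) - set cs = {w}"
      using induced_cycle_degree_three_outer_neighbour[OF assms(1,2)] assms(3) nth_mem[OF i] by blast
    then show ?thesis by (simp add: ob_def)
  qed
  define f where "f i = c (ob i)" for i
  have outer: "c u = f i" if "i < ?n" "u \<in> nbhd V E (cs ! i) - set cs" for i u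
    using ob that by (simp add: f_def)
  have "\<forall>i<?n. f i \<in> {1..3}"
    using ob assms(4) by (auto simp: f_def nbhd_def is_coloring_def)
  moreover have "\<nexists>col. cycle_coloring_avoiding ?n f col"
    using colorable_extend_across_induced_cycle[OF assms(1,2,4)] outer assms(5) by blast
  moreover have "2 \<le> ?n" using assms(2) by (simp add: induced_cycle_def)
  ultimately have "odd ?n" and f_const: "\<forall>i<?n. f i = f 0"
    using cycle_coloring_avoiding_exists by blast+
  moreover have "c u = f 0" if u: "u \<in> (\<Union>v\<in>set cs. nbhd V E v) - set cs" for u
  proof -
    obtain v where "v \<in> set cs" "u \<in> nbhd V E v - set cs" using u by blast
    then obtain i where "i < ?n" "u \<in> nbhd V E (cs ! i) - set cs" by (metis in_set_conv_nth)
    then have "c u = f i" by (rule outer)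
    also have "\<dots> = f 0" using f_const \<open>i < ?n\<close> by blast
    finally show ?thesis .
  qed
  ultimately show ?thesis by blast
qed

theorem lemma5:
  fixes V :: "'a set" and E :: "'a \<Rightarrow> 'a \<Rightarrow> bool" and cs :: "'a list"
  assumes "simple_graph V E"
    and "vertex_critical V E 4"
    and "induced_cycle V E cs"
    and "\<forall>v\<in>set cs. degree V E v = 3"
  shows "odd (length cs) \<and>
    (\<exists>c. is_coloring (V - set cs) E 3 c \<and>
        (\<exists>a. \<forall>u \<in> (\<Union>v\<in>set cs. nbhd V E v) - set cs. c u = a))"
proof -
  obtain v where "v \<in> set cs" using assms(3) by (cases cs) (auto simp: induced_cycle_def)
  moreover have "set cs \<subseteq> V" using assms(3) by (simp add: induced_cycle_def)
  ultimately have "V - set cs \<subset> V" by blast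
  with assms(2) have "colorable (V - set cs) E 3" "\<not> colorable V E 3"
    by (simp_all add: vertex_critical_def chromatic_def)
  then obtain c where "is_coloring (V - set cs) E 3 c" by (auto simp: colorable_def)
  with uncolorable_forces_outer_colors[OF assms(1,3,4)] \<open>\<not> colorable V E 3\<close> show ?thesis
    by blast
qed

end
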